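(* Let $n\ge 2$ be an integer, $a>0$, and let $a_0,\dots,a_{n-1}:((-a,a)\setminus\{0\})\times\mathbb{K}\to\mathbb{K}$ be arbitrary functions, where $\mathbb{K}=\mathbb{R}$ or $\mathbb{C}$. Let $f\in C^\infty(-a,a)$ be a solution of $$f^{(n)}(x)+a_{n-1}(x,f(x))f^{(n-1)}(x)+\cdots+a_0(x,f(x))f(x)=0,\qquad x\in(-a,a)\setminus\{0\},$$ such that $$|a_k(x,f(x))|=O\!\left(\frac{1}{|x|^{n-k}}\right)\quad\text{as }x\to 0,\qquad k=0,1,\dots,n-1.$$ Define $$C_n=\max_{0\le k\le n-1}\ \limsup_{x\to 0}\,|x|^{n-k}|a_k(x,f(x))|,\qquad B_n=\sum_{k=0}^{n-1}\frac1{k!}.$$ If $f^{(k)}(0)=0$ for every integer $k$ with $0\le k\le B_nC_n+n-1$, then there exists $\delta>0$ such that $f\equiv 0$ on $[-\delta,\delta]$.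
   Context: The coefficients may be singular at $x=0$; the equation is only required to hold for $x\neq 0$. By the $O$-hypothesis, $C_n$ is a finite nonnegative number. *)

theory Defs
  imports "HOL-Analysis.Analysis" "HOL-Library.Landau_Symbols"
begin

definition Cn_const :: "nat \<Rightarrow> (nat \<Rightarrow> real \<Rightarrow> 'a::real_normed_field \<Rightarrow> 'a) \<Rightarrow> (real \<Rightarrow> 'a) \<Rightarrow> ereal" where
  "Cn_const n A f =
     Max ((\<lambda>k. Limsup (at (0::real)) (\<lambda>x. ereal (\<bar>x\<bar> ^ (n - k) * norm (A k x (f x))))) ` {..<n})"

definition Bn_const :: "nat \<Rightarrow> real" where
  "Bn_const n = (\<Sum>k<n. 1 / fact k)"

end

theory Submission
  imports Defs
begin

(* Write D k for the k-th derivative of f, B = B_n and C = C_n.  Let e = floor(B*C),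
   so that D vanishes at 0 to order n + e, and choose c > C with c*B < e + 1.  Near 0 the ODE
   gives |D_n(t)| <= sum_{k<n} c |t|^(k-n) |D_k(t)|.  Integrating a bound
   |D_n(t)| <= M |t|^e down to the lower derivatives (which vanish at 0) and inserting it into
   this inequality returns the same bound with M replaced by q*M, where
   q = c * sum_{k<n} e!/(e+n-k)! <= c*B/(e+1) < 1.  Starting from the boundedness of D_(n+e),
   iterating shows D_n = 0 near 0, and integrating once more gives f = 0. *)

lemma power_bound_from_derivative_pos:
  fixes h h' :: "real \<Rightarrow> 'a::real_normed_vector"
  assumes x: "0 < x" and h0: "h 0 = 0"
    and der: "\<And>t. 0 \<le> t \<Longrightarrow> t \<le> x \<Longrightarrow> (h has_vector_derivative h' t) (at t)"
    and bnd: "\<And>t. 0 < t \<Longrightarrow> t < x \<Longrightarrow> norm (h' t) \<le> K * t ^ p"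
  shows "norm (h x) \<le> K * x ^ Suc p / Suc p"
proof -
  define \<phi> where "\<phi> t = K * t ^ Suc p / Suc p" for t :: real
  have \<phi>_deriv: "(\<phi> has_vector_derivative K * t ^ p) (at t)" for t
  proof -
    have "((\<lambda>t. K * t ^ Suc p / Suc p) has_real_derivative K * (Suc p * t ^ p) / Suc p) (at t)"
      using DERIV_pow[of "Suc p" t] by (intro DERIV_cdivide DERIV_cmult) simp
    then show ?thesis
      unfolding \<phi>_def has_real_derivative_iff_has_vector_derivative[symmetric] by simp
  qed
  have "continuous_on {0..x} h"
    using der by (intro continuous_at_imp_continuous_on ballI has_vector_derivative_continuous) auto
  moreover have "continuous_on {0..x} \<phi>"
    unfolding \<phi>_def by (intro continuous_intros) auto
  ultimately have "norm (h x - h 0) \<le> \<phi> x - \<phi> 0"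
    using x der \<phi>_deriv bnd
    by (intro differentiable_bound_general[of 0 x h \<phi> h' "\<lambda>t. K * t ^ p"])
       (auto intro: has_vector_derivative_at_within)
  then show ?thesis using h0 by (simp add: \<phi>_def)
qed

lemma power_bound_from_derivative:
  fixes h h' :: "real \<Rightarrow> 'a::real_normed_vector"
  assumes x: "x \<noteq> 0" and h0: "h 0 = 0"
    and der: "\<And>t. \<bar>t\<bar> \<le> \<bar>x\<bar> \<Longrightarrow> (h has_vector_derivative h' t) (at t)"
    and bnd: "\<And>t. 0 < \<bar>t\<bar> \<Longrightarrow> \<bar>t\<bar> < \<bar>x\<bar> \<Longrightarrow> norm (h' t) \<le> K * \<bar>t\<bar> ^ p"
  shows "norm (h x) \<le> K * \<bar>x\<bar> ^ Suc p / Suc p"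
proof (cases "x > 0")
  case True
  have "norm (h x) \<le> K * x ^ Suc p / Suc p"
  proof (rule power_bound_from_derivative_pos[of x h h', OF True h0])
    show "(h has_vector_derivative h' t) (at t)" if "0 \<le> t" "t \<le> x" for t
      using der that by simp
    show "norm (h' t) \<le> K * t ^ p" if "0 < t" "t < x" for t
      using bnd[of t] that by simp
  qed
  then show ?thesis using True by simp
next
  case False
  then have neg: "0 < - x" using x by simp
  have "norm ((h \<circ> uminus) (- x)) \<le> K * (- x) ^ Suc p / Suc p"
  proof (rule power_bound_from_derivative_pos[of "- x" "h \<circ> uminus" "\<lambda>t. - h' (- t)", OF neg])
    show "(h \<circ> uminus) 0 = 0" using h0 by simp
    show "((h \<circ> uminus) has_vector_derivative - h' (- t)) (at t)" if "0 \<le> t" "t \<le> - x" for t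
      using vector_diff_chain_at[OF has_vector_derivative_minus[OF has_vector_derivative_id]]
        der[of "- t"] that by (simp add: fun_Compl_def)
    show "norm (- h' (- t)) \<le> K * t ^ p" if "0 < t" "t < - x" for t
      using bnd[of "- t"] that by simp
  qed
  then show ?thesis using neg by simp
qed

lemma iterated_power_bound:
  fixes D :: "nat \<Rightarrow> real \<Rightarrow> 'a::real_normed_vector"
  assumes deriv: "\<And>i t. \<bar>t\<bar> \<le> r \<Longrightarrow> (D i has_vector_derivative D (Suc i) t) (at t)"
    and bnd: "\<And>t. 0 < \<bar>t\<bar> \<Longrightarrow> \<bar>t\<bar> \<le> r \<Longrightarrow> norm (D p t) \<le> K * \<bar>t\<bar> ^ e"
    and zero: "\<And>i. i < p \<Longrightarrow> p - j \<le> i \<Longrightarrow> D i 0 = 0"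
    and j: "j \<le> p"
  shows "0 < \<bar>t\<bar> \<Longrightarrow> \<bar>t\<bar> \<le> r \<Longrightarrow> norm (D (p - j) t) \<le> K * \<bar>t\<bar> ^ (e + j) * fact e / fact (e + j)"
  using zero j
proof (induction j arbitrary: t)
  case 0
  then show ?case using bnd[of t] by simp
next
  case (Suc j)
  have IH: "norm (D (p - j) s) \<le> K * \<bar>s\<bar> ^ (e + j) * fact e / fact (e + j)"
    if "0 < \<bar>s\<bar>" "\<bar>s\<bar> \<le> r" for s
    using Suc.IH[OF that] Suc.prems by auto
  have "norm (D (p - Suc j) t) \<le> (K * fact e / fact (e + j)) * \<bar>t\<bar> ^ Suc (e + j) / Suc (e + j)"
  proof (rule power_bound_from_derivative)
    show "(D (p - Suc j) has_vector_derivative D (p - j) s) (at s)" if "\<bar>s\<bar> \<le> \<bar>t\<bar>" for s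
      using deriv[of s "p - Suc j"] that Suc.prems Suc_diff_Suc[of j p] by simp
    show "norm (D (p - j) s) \<le> K * fact e / fact (e + j) * \<bar>s\<bar> ^ (e + j)"
      if "0 < \<bar>s\<bar>" "\<bar>s\<bar> < \<bar>t\<bar>" for s
      using IH[of s] that Suc.prems by (simp add: field_simps)
  qed (use Suc.prems in auto)
  also have "\<dots> = K * \<bar>t\<bar> ^ (e + Suc j) * fact e / fact (e + Suc j)"
    by (simp add: field_simps)
  finally show ?case .
qed

(* Elementary factorial inequality, from (e+1)! j! dividing (e+1+j)!. *)
lemma fact_ratio_bound:
  "fact e / fact (Suc e + j) \<le> (1::real) / (real (Suc e) * fact j)"
proof -
  have "fact (Suc e) * fact j \<le> (fact (Suc e + j) :: nat)"
    by (rule dvd_imp_le[OF fact_fact_dvd_fact]) simp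
  then have "fact (Suc e) * fact j \<le> (fact (Suc e + j) :: real)"
    by (metis of_nat_fact of_nat_le_iff of_nat_mult)
  then have "fact e * (real (Suc e) * fact j) \<le> fact (Suc e + j)"
    by (simp only: fact_Suc mult_ac)
  then show ?thesis
    by (simp add: divide_le_eq le_divide_eq)
qed

lemma factorial_ratio_sum_bound:
  "(\<Sum>k<n. fact e / fact (e + (n - k))) \<le> Bn_const n / real (Suc e)"
proof -
  have "(\<Sum>k<n. fact e / fact (e + (n - k))) \<le> (\<Sum>k<n. 1 / (real (Suc e) * fact (n - Suc k)))"
  proof (rule sum_mono)
    fix k assume "k \<in> {..<n}"
    then have "e + (n - k) = Suc e + (n - Suc k)" by auto
    then show "fact e / fact (e + (n - k)) \<le> 1 / (real (Suc e) * fact (n - Suc k))"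
      using fact_ratio_bound[of e "n - Suc k"] by simp
  qed
  also have "\<dots> = (\<Sum>k<n. 1 / fact (n - Suc k)) / real (Suc e)"
    by (simp only: sum_divide_distrib divide_divide_eq_left mult.commute)
  also have "(\<Sum>k<n. 1 / fact (n - Suc k)) = Bn_const n"
    unfolding Bn_const_def by (rule sum.nat_diff_reindex)
  finally show ?thesis .
qed

lemma flatness_contraction:
  fixes D :: "nat \<Rightarrow> real \<Rightarrow> 'a::real_normed_vector"
  assumes deriv: "\<And>i t. \<bar>t\<bar> \<le> r \<Longrightarrow> (D i has_vector_derivative D (Suc i) t) (at t)"
    and zero: "\<And>k. k < n \<Longrightarrow> D k 0 = 0"
    and ineq: "\<And>t. 0 < \<bar>t\<bar> \<Longrightarrow> \<bar>t\<bar> \<le> r \<Longrightarrow>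
                 norm (D n t) \<le> (\<Sum>k<n. c / \<bar>t\<bar> ^ (n - k) * norm (D k t))"
    and c: "0 \<le> c"
    and bound: "\<And>t. 0 < \<bar>t\<bar> \<Longrightarrow> \<bar>t\<bar> \<le> r \<Longrightarrow> norm (D n t) \<le> M * \<bar>t\<bar> ^ e"
    and t: "0 < \<bar>t\<bar>" "\<bar>t\<bar> \<le> r"
  shows "norm (D n t) \<le> (c * Bn_const n / Suc e) * M * \<bar>t\<bar> ^ e"
proof -
  have "0 \<le> M * \<bar>t\<bar> ^ e" by (rule order_trans[OF norm_ge_zero bound[OF t]])
  moreover have "0 < \<bar>t\<bar> ^ e" using t by simp
  ultimately have M: "0 \<le> M" by (metis not_le zero_le_mult_iff)
  have lower: "norm (D k t) \<le> M * \<bar>t\<bar> ^ (e + (n - k)) * (fact e / fact (e + (n - k)))"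
    if k: "k < n" for k
  proof -
    have "norm (D (n - (n - k)) t) \<le> M * \<bar>t\<bar> ^ (e + (n - k)) * fact e / fact (e + (n - k))"
      by (rule iterated_power_bound[OF deriv bound _ _ t]) (use zero in auto)
    then show ?thesis using k by simp
  qed
  have "norm (D n t) \<le> (\<Sum>k<n. c / \<bar>t\<bar> ^ (n - k) * norm (D k t))"
    by (rule ineq[OF t])
  also have "\<dots> \<le> (\<Sum>k<n. c / \<bar>t\<bar> ^ (n - k) * (M * \<bar>t\<bar> ^ (e + (n - k)) * (fact e / fact (e + (n - k)))))"
    using lower c by (intro sum_mono mult_left_mono) auto
  also have "\<dots> = (\<Sum>k<n. c * M * \<bar>t\<bar> ^ e * (fact e / fact (e + (n - k))))"
  proof (rule sum.cong[OF refl])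
    fix k
    have "\<bar>t\<bar> ^ (e + (n - k)) = \<bar>t\<bar> ^ (n - k) * \<bar>t\<bar> ^ e" by (simp add: power_add)
    then show "c / \<bar>t\<bar> ^ (n - k) * (M * \<bar>t\<bar> ^ (e + (n - k)) * (fact e / fact (e + (n - k)))) =
               c * M * \<bar>t\<bar> ^ e * (fact e / fact (e + (n - k)))"
      using t by simp
  qed
  also have "\<dots> = c * M * \<bar>t\<bar> ^ e * (\<Sum>k<n. fact e / fact (e + (n - k)))"
    by (rule sum_distrib_left[symmetric])
  also have "\<dots> \<le> c * M * \<bar>t\<bar> ^ e * (Bn_const n / Suc e)"
    using c M by (intro mult_left_mono factorial_ratio_sum_bound) auto
  also have "\<dots> = (c * Bn_const n / Suc e) * M * \<bar>t\<bar> ^ e"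
    by simp
  finally show ?thesis .
qed

lemma bounded_on_interval_if_differentiable:
  fixes g g' :: "real \<Rightarrow> 'a::real_normed_vector"
  assumes "\<And>t. \<bar>t\<bar> \<le> r \<Longrightarrow> (g has_vector_derivative g' t) (at t)"
  obtains K where "\<And>t. \<bar>t\<bar> \<le> r \<Longrightarrow> norm (g t) \<le> K"
proof -
  have "continuous_on {-r..r} g"
  proof (intro continuous_at_imp_continuous_on ballI)
    fix t assume "t \<in> {-r..r}"
    then have "\<bar>t\<bar> \<le> r" by auto
    then show "isCont g t" by (rule has_vector_derivative_continuous[OF assms])
  qed
  then have "bounded (g ` {-r..r})"
    by (intro compact_imp_bounded compact_continuous_image) auto
  then show ?thesis
    using that unfolding bounded_iff by (metis abs_le_iff atLeastAtMost_iff image_eqI minus_le_iff)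
qed

lemma zero_if_geometrically_small:
  fixes v :: "'a::real_normed_vector"
  assumes q: "0 \<le> q" "q < 1" and small: "\<And>j. norm v \<le> q ^ j * M"
  shows "v = 0"
proof -
  have "(\<lambda>j. q ^ j * M) \<longlonglongrightarrow> 0 * M"
    using q by (intro tendsto_mult tendsto_const LIMSEQ_power_zero) auto
  then have "norm v \<le> 0 * M"
    using small by (intro tendsto_le[OF trivial_limit_sequentially _ tendsto_const]) auto
  then show ?thesis by simp
qed

lemma flatness_iteration:
  fixes D :: "nat \<Rightarrow> real \<Rightarrow> 'a::real_normed_vector"
  assumes deriv: "\<And>i t. \<bar>t\<bar> \<le> r \<Longrightarrow> (D i has_vector_derivative D (Suc i) t) (at t)"
    and zero: "\<And>k. k < n + e \<Longrightarrow> D k 0 = 0"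
    and ineq: "\<And>t. 0 < \<bar>t\<bar> \<Longrightarrow> \<bar>t\<bar> \<le> r \<Longrightarrow>
                 norm (D n t) \<le> (\<Sum>k<n. c / \<bar>t\<bar> ^ (n - k) * norm (D k t))"
    and c: "0 \<le> c"
    and K: "\<And>t. \<bar>t\<bar> \<le> r \<Longrightarrow> norm (D (n + e) t) \<le> K"
    and t: "0 < \<bar>t\<bar>" "\<bar>t\<bar> \<le> r"
  shows "norm (D n t) \<le> (c * Bn_const n / Suc e) ^ j * (K / fact e * \<bar>t\<bar> ^ e)"
  using t
proof (induction j arbitrary: t)
  case 0
  have "norm (D (n + e - e) t) \<le> K * \<bar>t\<bar> ^ (0 + e) * fact 0 / fact (0 + e)"
    by (rule iterated_power_bound[where D = D and r = r and p = "n + e" and j = e and e = 0,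
          OF deriv _ _ _ 0]) (use K zero in auto)
  then show ?case by simp
next
  case (Suc j)
  let ?q = "c * Bn_const n / Suc e"
  have IH: "norm (D n s) \<le> (?q ^ j * (K / fact e)) * \<bar>s\<bar> ^ e" if "0 < \<bar>s\<bar>" "\<bar>s\<bar> \<le> r" for s
    using Suc.IH[OF that] by (simp only: mult.assoc)
  have "norm (D n t) \<le> ?q * (?q ^ j * (K / fact e)) * \<bar>t\<bar> ^ e"
    by (rule flatness_contraction[OF deriv _ ineq c IH Suc.prems]) (use zero in auto)
  then show ?case by (simp add: mult_ac)
qed

lemma flat_solution_vanishes:
  fixes D :: "nat \<Rightarrow> real \<Rightarrow> 'a::real_normed_vector"
  assumes deriv: "\<And>i t. \<bar>t\<bar> \<le> r \<Longrightarrow> (D i has_vector_derivative D (Suc i) t) (at t)"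
    and n: "0 < n"
    and zero: "\<And>k. k < n + e \<Longrightarrow> D k 0 = 0"
    and ineq: "\<And>t. 0 < \<bar>t\<bar> \<Longrightarrow> \<bar>t\<bar> \<le> r \<Longrightarrow>
                 norm (D n t) \<le> (\<Sum>k<n. c / \<bar>t\<bar> ^ (n - k) * norm (D k t))"
    and c: "0 \<le> c"
    and small: "c * Bn_const n < real (Suc e)"
    and t: "\<bar>t\<bar> \<le> r"
  shows "D 0 t = 0"
proof -
  obtain K where K: "\<And>s. \<bar>s\<bar> \<le> r \<Longrightarrow> norm (D (n + e) s) \<le> K"
    using bounded_on_interval_if_differentiable[OF deriv] by blast
  have "0 \<le> Bn_const n" unfolding Bn_const_def by (intro sum_nonneg) auto
  then have q: "0 \<le> c * Bn_const n / Suc e" "c * Bn_const n / Suc e < 1"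
    using c small by (auto simp: divide_less_eq)
  have punctured: "D n s = 0" if s: "0 < \<bar>s\<bar>" "\<bar>s\<bar> \<le> r" for s
    using flatness_iteration[OF deriv zero ineq c K s] by (rule zero_if_geometrically_small[OF q])
  show ?thesis
  proof (cases "t = 0")
    case True
    then show ?thesis using zero n by simp
  next
    case False
    have "norm (D (n - n) t) \<le> 0 * \<bar>t\<bar> ^ (0 + n) * fact 0 / fact (0 + n)"
      by (rule iterated_power_bound[where D = D and r = r and p = n and j = n and e = 0 and K = 0,
            OF deriv _ _ _ _ t]) (use punctured zero False in auto)
    then show ?thesis by simp
  qed
qed

lemma Cn_const_finite:
  assumes n: "0 < n"
    and bigO: "\<And>k. k < n \<Longrightarrow> (\<lambda>x. norm (A k x (f x))) \<in> O[at 0](\<lambda>x. 1 / \<bar>x\<bar> ^ (n - k))"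
  shows "\<exists>C\<ge>0. Cn_const n A f = ereal C"
proof -
  define L where "L k = Limsup (at (0::real)) (\<lambda>x. ereal (\<bar>x\<bar> ^ (n - k) * norm (A k x (f x))))" for k
  have L_nonneg: "0 \<le> L k" for k
    unfolding L_def by (rule le_Limsup) auto
  have L_finite: "L k < \<infinity>" if k: "k < n" for k
  proof -
    obtain b where "eventually (\<lambda>x. norm (norm (A k x (f x))) \<le> b * norm (1 / \<bar>x\<bar> ^ (n - k))) (at (0::real))"
      using bigO[OF k] by (elim landau_o.bigE)
    moreover have "eventually (\<lambda>x. (x::real) \<noteq> 0) (at 0)"
      by (simp add: eventually_at_filter)
    ultimately have "eventually (\<lambda>x. ereal (\<bar>x\<bar> ^ (n - k) * norm (A k x (f x))) \<le> ereal b) (at 0)"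
    proof eventually_elim
      case (elim x)
      then have "norm (A k x (f x)) \<le> b / \<bar>x\<bar> ^ (n - k)" by simp
      then have "\<bar>x\<bar> ^ (n - k) * norm (A k x (f x)) \<le> \<bar>x\<bar> ^ (n - k) * (b / \<bar>x\<bar> ^ (n - k))"
        by (intro mult_left_mono) auto
      then show ?case using elim by simp
    qed
    then have "L k \<le> ereal b" unfolding L_def by (rule Limsup_bounded)
    then show ?thesis by (rule le_less_trans) simp
  qed
  have "finite (L ` {..<n})" "L ` {..<n} \<noteq> {}" using n by auto
  from Max_in[OF this] obtain k where k: "k < n" "Cn_const n A f = L k"
    unfolding Cn_const_def L_def by auto
  then show ?thesis
    using L_nonneg[of k] L_finite[OF k(1)] by (cases "L k") auto
qed

lemma Cn_const_small_coefficients: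
  assumes below: "Cn_const n A f < ereal c" and a: "0 < a"
  obtains r where "0 < r" "r < a"
    and "\<And>t k. 0 < \<bar>t\<bar> \<Longrightarrow> \<bar>t\<bar> \<le> r \<Longrightarrow> k < n \<Longrightarrow> \<bar>t\<bar> ^ (n - k) * norm (A k t (f t)) < c"
proof -
  have "eventually (\<lambda>x. \<bar>x\<bar> ^ (n - k) * norm (A k x (f x)) < c) (at (0::real))" if "k < n" for k
  proof -
    have "Limsup (at 0) (\<lambda>x. ereal (\<bar>x\<bar> ^ (n - k) * norm (A k x (f x)))) \<le> Cn_const n A f"
      unfolding Cn_const_def using that by (intro Max_ge) auto
    then have "Limsup (at 0) (\<lambda>x. ereal (\<bar>x\<bar> ^ (n - k) * norm (A k x (f x)))) < ereal c"
      using below by (rule le_less_trans)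
    then have "eventually (\<lambda>x. ereal (\<bar>x\<bar> ^ (n - k) * norm (A k x (f x))) < ereal c) (at 0)"
      by (rule Limsup_lessD)
    then show ?thesis by simp
  qed
  then have "eventually (\<lambda>x. \<forall>k\<in>{..<n}. \<bar>x\<bar> ^ (n - k) * norm (A k x (f x)) < c) (at (0::real))"
    by (intro eventually_ball_finite) auto
  then obtain d where "0 < d"
    and d: "\<And>t. t \<noteq> 0 \<Longrightarrow> \<bar>t\<bar> < d \<Longrightarrow> \<forall>k<n. \<bar>t\<bar> ^ (n - k) * norm (A k t (f t)) < c"
    unfolding eventually_at by (auto simp: dist_real_def)
  then show ?thesis
    using a by (intro that[of "min (d / 2) (a / 2)"]) auto
qed

lemma linear_relation_norm_bound:
  fixes a y :: "nat \<Rightarrow> 'a::real_normed_field"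
  assumes eq: "y n + (\<Sum>k<n. a k * y k) = 0"
    and coeff: "\<And>k. k < n \<Longrightarrow> \<bar>t\<bar> ^ (n - k) * norm (a k) \<le> c"
    and t: "t \<noteq> 0"
  shows "norm (y n) \<le> (\<Sum>k<n. c / \<bar>t\<bar> ^ (n - k) * norm (y k))"
proof -
  have "norm (y n) = norm (\<Sum>k<n. a k * y k)"
    using eq by (simp add: eq_neg_iff_add_eq_0[symmetric])
  also have "\<dots> \<le> (\<Sum>k<n. norm (a k) * norm (y k))"
    by (rule order_trans[OF norm_sum]) (simp add: norm_mult)
  also have "\<dots> \<le> (\<Sum>k<n. c / \<bar>t\<bar> ^ (n - k) * norm (y k))"
  proof (rule sum_mono)
    fix k assume "k \<in> {..<n}"
    then have "norm (a k) \<le> c / \<bar>t\<bar> ^ (n - k)"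
      using coeff[of k] t by (simp add: field_simps)
    then show "norm (a k) * norm (y k) \<le> c / \<bar>t\<bar> ^ (n - k) * norm (y k)"
      by (rule mult_right_mono) simp
  qed
  finally show ?thesis .
qed

lemma Bn_const_pos: "0 < n \<Longrightarrow> 0 < Bn_const n"
  unfolding Bn_const_def by (intro sum_pos) auto

lemma flatness_parameters:
  fixes B C :: real
  assumes B: "0 < B" and C: "0 \<le> C"
  obtains e :: nat and c where "real e \<le> B * C" "C < c" "c * B < real (Suc e)"
proof -
  define e where "e = nat \<lfloor>B * C\<rfloor>"
  have "real e = of_int \<lfloor>B * C\<rfloor>"
    unfolding e_def using B C by simp
  then have e: "real e \<le> B * C" "B * C < real (Suc e)"
    unfolding of_nat_Suc using real_of_int_floor_add_one_gt[of "B * C"] by linarith+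
  then have "C < real (Suc e) / B"
    using B by (simp add: pos_less_divide_eq mult.commute)
  then obtain c where "C < c" "c * B < real (Suc e)"
    using dense B by (metis pos_less_divide_eq)
  then show ?thesis using e(1) that by blast
qed

theorem proposition9:
  fixes n :: nat and a :: real
    and A :: "nat \<Rightarrow> real \<Rightarrow> 'a::real_normed_field \<Rightarrow> 'a"
    and f :: "real \<Rightarrow> 'a" and D :: "nat \<Rightarrow> real \<Rightarrow> 'a"
  assumes n: "n \<ge> 2" and a: "a > 0"
    and D0: "\<And>x. x \<in> {-a<..<a} \<Longrightarrow> D 0 x = f x"
    and Dderiv: "\<And>k x. x \<in> {-a<..<a} \<Longrightarrow> (D k has_vector_derivative D (Suc k) x) (at x)"
    and ode: "\<And>x. x \<in> {-a<..<a} - {0} \<Longrightarrow> D n x + (\<Sum>k<n. A k x (f x) * D k x) = 0"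
    and bigO: "\<And>k. k < n \<Longrightarrow> (\<lambda>x. norm (A k x (f x))) \<in> O[at 0](\<lambda>x. 1 / \<bar>x\<bar> ^ (n - k))"
    and vanish: "\<And>k::nat. ereal (real k) \<le> ereal (Bn_const n) * Cn_const n A f + ereal (real n - 1) \<Longrightarrow> D k 0 = 0"
  shows "\<exists>\<delta>>0. \<delta> < a \<and> (\<forall>x\<in>{-\<delta>..\<delta>}. f x = 0)"
proof -
  obtain C where C: "0 \<le> C" "Cn_const n A f = ereal C"
    using Cn_const_finite[of n A f] n bigO by auto
  have B: "0 < Bn_const n" using n by (intro Bn_const_pos) simp
  obtain e c where e: "real e \<le> Bn_const n * C" and c: "C < c" "c * Bn_const n < real (Suc e)"
    using flatness_parameters[OF B C(1)] by blast
  have zero: "D k 0 = 0" if "k < n + e" for k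
    using vanish[of k] that e C by simp
  obtain r where r: "0 < r" "r < a" and coeff:
      "\<And>t k. 0 < \<bar>t\<bar> \<Longrightarrow> \<bar>t\<bar> \<le> r \<Longrightarrow> k < n \<Longrightarrow> \<bar>t\<bar> ^ (n - k) * norm (A k t (f t)) < c"
    using Cn_const_small_coefficients[of n A f c, OF _ a] c C by auto
  have in_domain: "\<bar>t\<bar> \<le> r \<Longrightarrow> t \<in> {-a<..<a}" for t using r by (auto simp: abs_le_iff)
  have deriv: "\<And>i t. \<bar>t\<bar> \<le> r \<Longrightarrow> (D i has_vector_derivative D (Suc i) t) (at t)"
    using Dderiv in_domain by blast
  have ineq: "norm (D n t) \<le> (\<Sum>k<n. c / \<bar>t\<bar> ^ (n - k) * norm (D k t))"
    if "0 < \<bar>t\<bar>" "\<bar>t\<bar> \<le> r" for t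
    using coeff[OF that] ode[of t] in_domain[OF that(2)] that
    by (intro linear_relation_norm_bound[where a = "\<lambda>k. A k t (f t)"]) (auto intro: less_imp_le)
  have "D 0 t = 0" if "\<bar>t\<bar> \<le> r" for t
    using c C n by (intro flat_solution_vanishes[where D = D and r = r and e = e and c = c,
          OF deriv _ zero ineq _ _ that]) auto
  then show ?thesis using r D0 in_domain by (intro exI[of _ r]) auto
qed

end
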